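(* For each $l\in\mathbb N$ there exists a constant $B_l$ such that, for each $j\in\mathbb N$ and all large enough $t$, $$\big|\mathbb E K^{(j)}_t(l)-\mathbb E\mathcal K^{(j)}_{\lfloor t\rfloor}(l)\big|\le B_l;$$ the constant $B_l$ does not depend on $j$.
   Context: Let $(p_k)_{k\in\mathbb N}$ be a probability distribution on $\mathbb N$ with $p_k>0$ for infinitely many $k$. For a word $r=r_1\cdots r_j\in\mathbb N^j$ write $|r|=j$, $p_r:=p_{r_1}\cdots p_{r_j}$; words of length $j$ are the generation-$j$ boxes. Nested Karlin occupancy scheme: balls $1,2,\ldots$ are thrown independently; ball $i$ carries an i.i.d. sequence $\xi_{i,1},\xi_{i,2},\ldots$ with law $(p_k)$ and lies, in generation $j$, in box $\xi_{i,1}\cdots\xi_{i,j}$. $\mathcal K_n^{(j)}(l)$ is the number of generation-$j$ boxes containing at least $l$ of balls $1,\ldots,n$; with $(\pi(t))_{t\ge0}$ a unit-rate Poisson process independent of the balls, $K^{(j)}_t(l):=\mathcal K^{(j)}_{\pi(t)}(l)$. *)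

theory Defs
  imports "HOL-Probability.Probability"
begin

text \<open>Ball i carries the i.i.d. sequence (omega i 0, omega i 1, ...) with law p;
  the balls are independent.\<close>

definition ball_space :: "nat pmf \<Rightarrow> (nat \<Rightarrow> nat \<Rightarrow> nat) measure" where
  "ball_space p = PiM UNIV (\<lambda>i::nat. PiM UNIV (\<lambda>k::nat. measure_pmf p))"

text \<open>The generation-j box of ball i is the word xi_{i,1} ... xi_{i,j}.\<close>

definition box :: "(nat \<Rightarrow> nat \<Rightarrow> nat) \<Rightarrow> nat \<Rightarrow> nat \<Rightarrow> nat list" where
  "box \<omega> j i = map (\<omega> i) [0..<j]"

text \<open>Number of generation-j boxes containing at least l of the balls 1..n
  (balls are indexed 0..n-1 here).\<close>

definition occ :: "(nat \<Rightarrow> nat \<Rightarrow> nat) \<Rightarrow> nat \<Rightarrow> nat \<Rightarrow> nat \<Rightarrow> nat" where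
  "occ \<omega> j l n = card {r. length r = j \<and> l \<le> card {i. i < n \<and> box \<omega> j i = r}}"

definition EK_fixed :: "nat pmf \<Rightarrow> nat \<Rightarrow> nat \<Rightarrow> nat \<Rightarrow> real" where
  "EK_fixed p j l n = integral\<^sup>L (ball_space p) (\<lambda>\<omega>. real (occ \<omega> j l n))"

text \<open>Expectation of the Poissonized count K_t = count at pi(t), where pi(t) is
  Poisson(t) distributed and independent of the balls.\<close>

definition EK_pois :: "nat pmf \<Rightarrow> nat \<Rightarrow> nat \<Rightarrow> real \<Rightarrow> real" where
  "EK_pois p j l t = integral\<^sup>L (ball_space p \<Otimes>\<^sub>M measure_pmf (poisson_pmf t))
      (\<lambda>(\<omega>, N). real (occ \<omega> j l N))"

end

theory Submission
  imports Defs
begin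

text \<open>
  The generation-j boxes of the first n balls are n independent draws of a random word of
  length j. Hence \<open>EK_fixed p j l n = f n\<close> with \<open>f = expected_frequent (replicate_pmf j p) l\<close>,
  the expected number of values occurring at least l times in an i.i.d. sample of size n, and
  \<open>EK_pois p j l t\<close> is the expectation of \<open>f N\<close> for N Poisson with mean t. One more sample point x raises the count exactly when x has already
  occurred l - 1 times, so \<open>f (n + 1) - f n\<close> is an average of binomial probabilities
  P(Bin(n, q) = l - 1): it lies in [0, 1] and changes by at most l / (n + 1) from n to n + 1.
  Expanding f to first order around \<open>n = nat \<lfloor>t\<rfloor>\<close> leaves a remainder of at most
  2 l (N - n)^2 / (n + 1), and E (N - n)^2 = t + (t - n)^2 \<le> 2 (n + 1). This gives the bound
  4 l + 1, uniformly in j and in the law of the words.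
\<close>

section \<open>Discrete Taylor bounds\<close>

lemma sum_increments_deviation_le:
  fixes f :: "nat \<Rightarrow> real"
  assumes "a \<le> b" and "\<And>k. a \<le> k \<Longrightarrow> k < b \<Longrightarrow> \<bar>f (Suc k) - f k - D\<bar> \<le> E"
  shows "\<bar>f b - f a - (real b - real a) * D\<bar> \<le> (real b - real a) * E"
proof -
  have "f b - f a - (real b - real a) * D = (\<Sum>k = a..<b. f (Suc k) - f k) - (\<Sum>k = a..<b. D)"
    using assms(1) by (simp add: sum_Suc_diff' of_nat_diff)
  also have "\<dots> = (\<Sum>k = a..<b. f (Suc k) - f k - D)"
    by (rule sum_subtractf[symmetric])
  finally have "\<bar>f b - f a - (real b - real a) * D\<bar> = \<bar>\<Sum>k = a..<b. f (Suc k) - f k - D\<bar>"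
    by simp
  also have "\<dots> \<le> (\<Sum>k = a..<b. E)"
    using assms(2) by (intro order_trans[OF sum_abs] sum_mono) auto
  finally show ?thesis using assms(1) by (simp add: of_nat_diff)
qed

lemma increment_deviation_le:
  fixes d :: "nat \<Rightarrow> real"
  assumes "\<And>k. \<bar>d (Suc k) - d k\<bar> \<le> L / (real k + 1)" and "L \<ge> 0" and "a \<le> b"
  shows "\<bar>d b - d a\<bar> \<le> (real b - real a) * (L / (real a + 1))"
proof -
  have step: "\<bar>d (Suc k) - d k - 0\<bar> \<le> L / (real a + 1)" if "a \<le> k" for k
  proof -
    have "L / (real k + 1) \<le> L / (real a + 1)"
      using that \<open>L \<ge> 0\<close> by (intro divide_left_mono) auto
    then show ?thesis using assms(1)[of k] by simp
  qed
  have "\<bar>d b - d a - (real b - real a) * 0\<bar> \<le> (real b - real a) * (L / (real a + 1))"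
    by (rule sum_increments_deviation_le[OF \<open>a \<le> b\<close>]) (rule step)
  then show ?thesis by simp
qed

lemma bounded_increment_deviation_le:
  fixes d :: "nat \<Rightarrow> real"
  assumes dd: "\<And>k. \<bar>d (Suc k) - d k\<bar> \<le> L / (real k + 1)" and L: "L \<ge> 1"
    and d01: "\<And>k. d k \<in> {0..1}"
  shows "\<bar>d k - d n\<bar> \<le> 2 * L * \<bar>real k - real n\<bar> / (real n + 1)"
proof (cases "n \<le> k")
  case True
  have "\<bar>d k - d n\<bar> \<le> (real k - real n) * (L / (real n + 1))"
    using increment_deviation_le[OF dd _ True] L by simp
  also have "\<dots> \<le> 2 * L * \<bar>real k - real n\<bar> / (real n + 1)"
    using True L by (simp add: divide_right_mono)
  finally show ?thesis .
next
  case False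
  then have dist: "\<bar>real k - real n\<bar> = real n - real k" by simp
  show ?thesis
  proof (cases "real n + 1 \<le> 2 * (real k + 1)")
    case True
    have "\<bar>d n - d k\<bar> \<le> (real n - real k) * (L / (real k + 1))"
      using increment_deviation_le[OF dd] L False by simp
    also have "\<dots> \<le> (real n - real k) * (2 * L / (real n + 1))"
    proof -
      have "L * (real n + 1) \<le> L * (2 * (real k + 1))"
        using True L by (intro mult_left_mono) auto
      then have "L / (real k + 1) \<le> 2 * L / (real n + 1)"
        by (simp add: field_simps)
      then show ?thesis using False by (intro mult_left_mono) auto
    qed
    finally show ?thesis by (simp add: abs_minus_commute dist mult_ac)
  next
    case far: False
    have "\<bar>d k - d n\<bar> \<le> 1" using d01[of k] d01[of n] by auto
    also have "1 \<le> 2 * \<bar>real k - real n\<bar> / (real n + 1)"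
      using far by (simp add: dist)
    also have "\<dots> \<le> 2 * L * \<bar>real k - real n\<bar> / (real n + 1)"
      using L by (intro divide_right_mono mult_right_mono) auto
    finally show ?thesis .
  qed
qed

lemma first_order_remainder_le:
  fixes f :: "nat \<Rightarrow> real"
  assumes dd: "\<And>k. \<bar>(f (Suc (Suc k)) - f (Suc k)) - (f (Suc k) - f k)\<bar> \<le> L / (real k + 1)"
    and L: "L \<ge> 1" and inc: "\<And>k. f (Suc k) - f k \<in> {0..1}"
  shows "\<bar>f N - f n - (real N - real n) * (f (Suc n) - f n)\<bar> \<le> 2 * L * (real N - real n)^2 / (real n + 1)"
proof -
  define d where "d k = f (Suc k) - f k" for k
  define E where "E = 2 * L * \<bar>real N - real n\<bar> / (real n + 1)"
  have dd': "\<bar>d (Suc k) - d k\<bar> \<le> L / (real k + 1)" for k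
    using dd[of k] by (simp add: d_def)
  have inc': "d k \<in> {0..1}" for k
    using inc[of k] by (simp add: d_def)
  have near: "\<bar>f (Suc k) - f k - d n\<bar> \<le> E" if "\<bar>real k - real n\<bar> \<le> \<bar>real N - real n\<bar>" for k
  proof -
    have "\<bar>d k - d n\<bar> \<le> 2 * L * \<bar>real k - real n\<bar> / (real n + 1)"
      by (rule bounded_increment_deviation_le[OF dd' L inc'])
    also have "\<dots> \<le> E"
      unfolding E_def using that L by (intro divide_right_mono mult_left_mono) auto
    finally show ?thesis by (simp add: d_def)
  qed
  have "\<bar>f N - f n - (real N - real n) * d n\<bar> \<le> \<bar>real N - real n\<bar> * E"
  proof (cases "n \<le> N")
    case True
    have "\<bar>f N - f n - (real N - real n) * d n\<bar> \<le> (real N - real n) * E"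
      using True by (rule sum_increments_deviation_le[of n N f "d n" E]) (intro near; simp)
    then show ?thesis using True by simp
  next
    case False
    have "\<bar>f n - f N - (real n - real N) * d n\<bar> \<le> (real n - real N) * E"
      using False by (intro sum_increments_deviation_le[of N n f "d n" E] near) auto
    moreover have "f N - f n - (real N - real n) * d n = - (f n - f N - (real n - real N) * d n)"
      by (simp add: algebra_simps)
    ultimately show ?thesis using False by (simp only: abs_minus_cancel) simp
  qed
  also have "\<bar>real N - real n\<bar> * E = 2 * L * \<bar>real N - real n\<bar>^2 / (real n + 1)"
    by (simp add: E_def power2_eq_square)
  finally show ?thesis by (simp add: d_def)
qed

section \<open>Poisson smoothing\<close>

lemma expectation_pmf_nat_sums:
  fixes M :: "nat pmf" and g :: "nat \<Rightarrow> real"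
  assumes "\<And>N. 0 \<le> g N" and "(\<lambda>N. pmf M N * g N) sums s"
  shows "integrable M g" and "measure_pmf.expectation M g = s"
proof -
  have summable: "summable (\<lambda>N. norm (pmf M N * g N))"
    using assms by (simp add: sums_iff abs_of_nonneg)
  then show "integrable M g"
    unfolding measure_pmf_eq_density
    by (subst integrable_density) (auto simp: integrable_count_space_nat_iff)
  have "measure_pmf.expectation M g = (\<integral>N. pmf M N * g N \<partial>count_space UNIV)"
    unfolding measure_pmf_eq_density by (subst integral_density) auto
  also have "\<dots> = s"
    using summable assms(2)
    by (subst integral_count_space_nat) (auto simp: integrable_count_space_nat_iff sums_iff)
  finally show "measure_pmf.expectation M g = s" .
qed

lemma pmf_poisson_Suc_mult:
  assumes "t > 0"
  shows "pmf (poisson_pmf t) (Suc m) * real (Suc m) = t * pmf (poisson_pmf t) m"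
proof -
  have "fact (Suc m) = real (Suc m) * (fact m :: real)" by simp
  moreover have "real (Suc m) \<noteq> 0" "(fact m :: real) \<noteq> 0" by auto
  ultimately show ?thesis using assms by (simp only: pmf_poisson) (simp add: divide_simps)
qed

lemma poisson_pmf_sums:
  assumes t: "t > 0"
  shows "(\<lambda>N. pmf (poisson_pmf t) N) sums 1"
    and "(\<lambda>N. pmf (poisson_pmf t) N * real N) sums t"
    and "(\<lambda>N. pmf (poisson_pmf t) N * real N ^ 2) sums (t^2 + t)"
proof -
  have "(\<lambda>N. t ^ N / fact N) sums exp t"
    using exp_converges[of t] by (simp add: divide_inverse mult.commute)
  from sums_mult2[OF this, of "exp (- t)"]
  show mass: "(\<lambda>N. pmf (poisson_pmf t) N) sums 1"
    by (simp add: pmf_poisson[OF t] exp_minus_inverse)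
  have "(\<lambda>m. pmf (poisson_pmf t) (Suc m) * real (Suc m)) sums (t * 1)"
    unfolding pmf_poisson_Suc_mult[OF t] by (intro sums_mult mass)
  then show mean: "(\<lambda>N. pmf (poisson_pmf t) N * real N) sums t"
    by (subst (asm) sums_Suc_iff) simp
  have "(\<lambda>m. t * (pmf (poisson_pmf t) m * real m + pmf (poisson_pmf t) m)) sums (t * (t + 1))"
    by (intro sums_mult sums_add mean mass)
  moreover have "pmf (poisson_pmf t) (Suc m) * real (Suc m) * real (Suc m)
      = t * (pmf (poisson_pmf t) m * real m + pmf (poisson_pmf t) m)" for m
    by (simp only: pmf_poisson_Suc_mult[OF t]) (simp add: algebra_simps)
  ultimately have "(\<lambda>m. pmf (poisson_pmf t) (Suc m) * real (Suc m) * real (Suc m)) sums (t * (t + 1))"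
    by simp
  then show "(\<lambda>N. pmf (poisson_pmf t) N * real N ^ 2) sums (t^2 + t)"
    by (subst (asm) sums_Suc_iff) (simp add: power2_eq_square algebra_simps)
qed

lemma poisson_pmf_mean:
  assumes "t > 0"
  shows "integrable (poisson_pmf t) real" and "measure_pmf.expectation (poisson_pmf t) real = t"
  using expectation_pmf_nat_sums[of real] poisson_pmf_sums(2)[OF assms] by auto

lemma poisson_pmf_sq_deviation:
  assumes t: "t > 0"
  shows "integrable (poisson_pmf t) (\<lambda>N. (real N - c)^2)"
    and "measure_pmf.expectation (poisson_pmf t) (\<lambda>N. (real N - c)^2) = t + (t - c)^2"
proof -
  note sums = poisson_pmf_sums[OF t]
  have "(\<lambda>N. pmf (poisson_pmf t) N * real N ^ 2 - 2 * c * (pmf (poisson_pmf t) N * real N)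
           + c^2 * pmf (poisson_pmf t) N) sums (t^2 + t - 2 * c * t + c^2 * 1)"
    by (intro sums_add sums_diff sums_mult sums)
  then have "(\<lambda>N. pmf (poisson_pmf t) N * (real N - c)^2) sums (t + (t - c)^2)"
    by (simp add: power2_eq_square algebra_simps)
  then show "integrable (poisson_pmf t) (\<lambda>N. (real N - c)^2)"
    and "measure_pmf.expectation (poisson_pmf t) (\<lambda>N. (real N - c)^2) = t + (t - c)^2"
    using expectation_pmf_nat_sums[of "\<lambda>N. (real N - c)^2"] by auto
qed

lemma poisson_expectation_near_floor:
  fixes f :: "nat \<Rightarrow> real"
  assumes dd: "\<And>k. \<bar>(f (Suc (Suc k)) - f (Suc k)) - (f (Suc k) - f k)\<bar> \<le> L / (real k + 1)"
    and L: "L \<ge> 1" and inc: "\<And>k. f (Suc k) - f k \<in> {0..1}" and t: "t \<ge> 1"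
  shows "\<bar>measure_pmf.expectation (poisson_pmf t) f - f (nat \<lfloor>t\<rfloor>)\<bar> \<le> 4 * L + 1"
proof -
  define n where "n = nat \<lfloor>t\<rfloor>"
  have tn: "real n \<le> t" "t < real n + 1" unfolding n_def using t by linarith+
  define P where "P = poisson_pmf t"
  define d where "d = f (Suc n) - f n"
  define c where "c = 2 * L / (real n + 1)"
  define R where "R N = f N - f n - (real N - real n) * d" for N
  have t0: "t > 0" using t by simp
  note mean = poisson_pmf_mean[OF t0, folded P_def]
  note sq_dev = poisson_pmf_sq_deviation[OF t0, of "real n", folded P_def]
  have R_le: "\<bar>R N\<bar> \<le> c * (real N - real n)^2" for N
    using first_order_remainder_le[OF dd L inc, of N n] unfolding R_def d_def c_def by simp
  have int_R: "integrable P R"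
    by (rule Bochner_Integration.integrable_bound[OF integrable_mult_right[OF sq_dev(1), of c]])
       (auto intro!: AE_pmfI order_trans[OF R_le])
  have int_lin: "integrable P (\<lambda>N. (real N - real n) * d)"
    using mean(1) by (intro integrable_mult_left Bochner_Integration.integrable_diff) auto
  have f_eq: "f = (\<lambda>N. R N + f n + (real N - real n) * d)"
    unfolding R_def by simp
  have lin: "measure_pmf.expectation P (\<lambda>N. (real N - real n) * d) = (t - real n) * d"
    using mean by (simp add: Bochner_Integration.integral_diff)
  have "measure_pmf.expectation P f = measure_pmf.expectation P R + f n + (t - real n) * d"
    by (subst f_eq) (use int_R int_lin lin in \<open>simp add: Bochner_Integration.integral_add\<close>)
  moreover have "\<bar>measure_pmf.expectation P R\<bar> \<le> 4 * L"
  proof -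
    have "\<bar>measure_pmf.expectation P R\<bar> \<le> measure_pmf.expectation P (\<lambda>N. c * (real N - real n)^2)"
      using int_R sq_dev(1) R_le
      by (intro order_trans[OF integral_abs_bound] integral_mono) auto
    also have "\<dots> = c * (t + (t - real n)^2)"
      using sq_dev(2) by simp
    also have "\<dots> \<le> c * (2 * (real n + 1))"
    proof -
      have "(t - real n)^2 \<le> 1" using tn by (simp add: abs_square_le_1)
      then show ?thesis using tn L by (intro mult_left_mono) (auto simp: c_def)
    qed
    also have "\<dots> = 4 * L" unfolding c_def by (simp add: field_simps)
    finally show ?thesis .
  qed
  moreover have "\<bar>(t - real n) * d\<bar> \<le> 1"
    using inc[of n] tn unfolding d_def by (simp add: abs_mult mult_le_one)
  ultimately show ?thesis
    unfolding P_def[symmetric] n_def[symmetric] by linarith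
qed

section \<open>Binomial probabilities\<close>

lemma pmf_binomial_Suc:
  assumes q: "q \<in> {0..1}"
  shows "pmf (binomial_pmf (Suc n) q) m
           = q * pmf (map_pmf Suc (binomial_pmf n q)) m + (1 - q) * pmf (binomial_pmf n q) m"
proof -
  have "pmf (binomial_pmf (Suc n) q) m
      = pmf (bernoulli_pmf q \<bind>
               (\<lambda>b. binomial_pmf n q \<bind> (\<lambda>k. return_pmf ((if b then 1 else 0) + k)))) m"
    by (simp only: binomial_pmf_Suc[OF q])
  also have "\<dots> = pmf (binomial_pmf n q \<bind> (\<lambda>k. return_pmf (1 + k))) m * q
                  + pmf (binomial_pmf n q \<bind> (\<lambda>k. return_pmf (0 + k))) m * (1 - q)"
    using q by (simp only: pmf_bind[of "bernoulli_pmf q"] integral_bernoulli_pmf if_True if_False) simp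
  finally show ?thesis
    by (simp add: map_pmf_def bind_return_pmf' mult.commute)
qed

text \<open>The key identity is q P(Bin(n, q) = k) = (k + 1) / (n + 1) P(Bin(n + 1, q) = k + 1).\<close>

lemma mult_pmf_binomial_le:
  assumes q: "q \<in> {0..1}"
  shows "q * pmf (binomial_pmf n q) k \<le> (real k + 1) / (real n + 1)"
proof (cases "k \<le> n")
  case False
  then show ?thesis using q by (simp add: binomial_eq_0 not_le)
next
  case True
  have choose: "real (Suc k) * real (Suc n choose Suc k) = real (Suc n) * real (n choose k)"
    using Suc_times_binomial[of k n] by (metis of_nat_mult)
  have "q * pmf (binomial_pmf n q) k = q * (real (n choose k) * q ^ k * (1 - q) ^ (n - k))"
    using q by simp
  also have "\<dots> = (real (Suc n) * real (n choose k)) * q ^ Suc k * (1 - q) ^ (Suc n - Suc k) / real (Suc n)"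
    by (simp add: field_simps)
  also have "\<dots> = real (Suc k) * (real (Suc n choose Suc k) * q ^ Suc k * (1 - q) ^ (Suc n - Suc k))
                    / real (Suc n)"
    unfolding choose[symmetric] by (simp add: field_simps)
  also have "\<dots> = real (Suc k) * pmf (binomial_pmf (Suc n) q) (Suc k) / real (Suc n)"
    using q by simp
  also have "\<dots> \<le> real (Suc k) * 1 / real (Suc n)"
    by (intro divide_right_mono mult_left_mono pmf_le_1) auto
  finally show ?thesis by (simp add: add.commute)
qed

lemma pmf_binomial_Suc_diff_le:
  assumes q: "q \<in> {0..1}"
  shows "\<bar>pmf (binomial_pmf (Suc n) q) m - pmf (binomial_pmf n q) m\<bar> \<le> (real m + 1) / (real n + 1)"
proof -
  define B where "B = binomial_pmf n q"
  have shifted: "0 \<le> q * pmf (map_pmf Suc B) m \<and> q * pmf (map_pmf Suc B) m \<le> (real m + 1) / (real n + 1)"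
  proof (cases m)
    case 0
    then show ?thesis by (simp add: pmf_map_outside)
  next
    case (Suc m')
    have "q * pmf B m' \<le> (real m' + 1) / (real n + 1)"
      unfolding B_def by (rule mult_pmf_binomial_le[OF q])
    also have "\<dots> \<le> (real m + 1) / (real n + 1)"
      using Suc by (intro divide_right_mono) auto
    finally show ?thesis using q Suc by (simp add: pmf_map_inj')
  qed
  have "0 \<le> q * pmf B m" "q * pmf B m \<le> (real m + 1) / (real n + 1)"
    using q mult_pmf_binomial_le[OF q, of n m] by (auto simp: B_def)
  moreover have "pmf (binomial_pmf (Suc n) q) m - pmf B m = q * pmf (map_pmf Suc B) m - q * pmf B m"
    using pmf_binomial_Suc[OF q, of n m] unfolding B_def by (simp add: algebra_simps)
  ultimately show ?thesis using shifted unfolding B_def by linarith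
qed

section \<open>Frequent values in an i.i.d. sample\<close>

lemma expectation_pair_pmf:
  fixes g :: "'a \<times> 'b \<Rightarrow> real"
  assumes "\<And>z. \<bar>g z\<bar> \<le> C"
  shows "measure_pmf.expectation (pair_pmf A B) g
           = measure_pmf.expectation A (\<lambda>a. measure_pmf.expectation B (\<lambda>b. g (a, b)))"
proof -
  have "measure_pmf (pair_pmf A B) = measure_pmf A \<bind> (\<lambda>a. measure_pmf (map_pmf (Pair a) B))"
    by (simp add: pair_pmf_def map_pmf_def measure_pmf_bind)
  also have "integral\<^sup>L \<dots> g
      = measure_pmf.expectation A (\<lambda>a. measure_pmf.expectation (map_pmf (Pair a) B) g)"
    using assms measurable_measure_pmf[of "\<lambda>a. map_pmf (Pair a) B"]
    by (intro integral_bind[where K = "count_space UNIV" and B = C and B' = 1]) auto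
  finally show ?thesis by simp
qed

lemma map_pmf_eq_bernoulli_pmf: "map_pmf ((=) x) P = bernoulli_pmf (pmf P x)"
proof (rule pmf_eqI)
  fix b :: bool
  show "pmf (map_pmf ((=) x) P) b = pmf (bernoulli_pmf (pmf P x)) b"
  proof (cases b)
    case True
    have "(=) x -` {True} = {x}" by auto
    then show ?thesis using True by (simp add: pmf_map measure_pmf_single pmf_le_1)
  next
    case False
    have "(=) x -` {False} = UNIV - {x}" by auto
    moreover have "measure P (UNIV - {x}) = measure P UNIV - measure P {x}"
      by (rule measure_pmf.finite_measure_Diff) auto
    ultimately show ?thesis using False by (simp add: pmf_map measure_pmf_single pmf_le_1)
  qed
qed

lemma replicate_pmf_map: "replicate_pmf n (map_pmf f P) = map_pmf (map f) (replicate_pmf n P)"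
  by (induction n) (simp_all add: map_pmf_def bind_assoc_pmf bind_return_pmf)

lemma count_list_replicate_pmf:
  "map_pmf (\<lambda>xs. count_list xs x) (replicate_pmf n P) = binomial_pmf n (pmf P x)"
proof -
  have "binomial_pmf n (pmf P x)
      = map_pmf (length \<circ> filter id) (map_pmf (map ((=) x)) (replicate_pmf n P))"
    using binomial_pmf_altdef[of "pmf P x" n]
    by (simp add: pmf_le_1 map_pmf_eq_bernoulli_pmf[symmetric] replicate_pmf_map)
  also have "\<dots> = map_pmf (\<lambda>xs. count_list xs x) (replicate_pmf n P)"
    by (simp add: map_pmf_comp count_list_eq_length_filter filter_map comp_def)
  finally show ?thesis ..
qed

lemma replicate_pmf_Suc':
  "replicate_pmf (Suc n) P = map_pmf (\<lambda>(y, ys). y # ys) (pair_pmf P (replicate_pmf n P))"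
  by (simp add: pair_pmf_def map_pmf_def bind_assoc_pmf bind_return_pmf)

lemma pmf_replicate_pmf:
  "pmf (replicate_pmf n P) xs = (if length xs = n then (\<Prod>i<n. pmf P (xs ! i)) else 0)"
proof (induction n arbitrary: xs)
  case 0
  then show ?case by (simp add: pmf_return)
next
  case (Suc n)
  show ?case
  proof (cases xs)
    case Nil
    then show ?thesis unfolding replicate_pmf_Suc' by (subst pmf_map_outside) auto
  next
    case (Cons y ys)
    have inj: "inj (\<lambda>(y, ys). y # ys)"
      by (auto simp: inj_def)
    have "pmf (replicate_pmf (Suc n) P) xs = pmf (pair_pmf P (replicate_pmf n P)) (y, ys)"
      unfolding replicate_pmf_Suc' Cons using pmf_map_inj'[OF inj, of _ "(y, ys)"] by simp
    then have "pmf (replicate_pmf (Suc n) P) xs = pmf P y * pmf (replicate_pmf n P) ys"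
      by (simp add: pmf_pair)
    then show ?thesis using Suc Cons by (simp add: prod.lessThan_Suc_shift del: prod.lessThan_Suc)
  qed
qed

definition num_frequent :: "nat \<Rightarrow> 'a list \<Rightarrow> nat" where
  "num_frequent l xs = card {x. l \<le> count_list xs x}"

lemma frequent_subset_set:
  assumes "l \<ge> 1"
  shows "{x. l \<le> count_list xs x} \<subseteq> set xs"
proof
  fix x assume "x \<in> {x. l \<le> count_list xs x}"
  with assms have "count_list xs x \<noteq> 0" by simp
  then show "x \<in> set xs" by (simp add: count_list_0_iff)
qed

lemma num_frequent_le_length: "l \<ge> 1 \<Longrightarrow> num_frequent l xs \<le> length xs"
  unfolding num_frequent_def
  by (rule order_trans[OF card_mono[OF List.finite_set frequent_subset_set] card_length])

lemma num_frequent_Cons: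
  assumes "l \<ge> 1"
  shows "num_frequent l (x # xs) = num_frequent l xs + (if count_list xs x = l - 1 then 1 else 0)"
proof -
  define S where "S = {y. l \<le> count_list xs y}"
  have "finite S"
    unfolding S_def by (rule finite_subset[OF frequent_subset_set[OF assms] List.finite_set])
  show ?thesis
  proof (cases "count_list xs x = l - 1")
    case True
    then have "{y. l \<le> count_list (x # xs) y} = insert x S" "x \<notin> S"
      using assms unfolding S_def by auto
    then show ?thesis using True \<open>finite S\<close> unfolding num_frequent_def S_def[symmetric] by simp
  next
    case False
    then have "{y. l \<le> count_list (x # xs) y} = S"
      using assms unfolding S_def by auto
    then show ?thesis using False unfolding num_frequent_def S_def[symmetric] by simp
  qed
qed

definition expected_frequent :: "'a pmf \<Rightarrow> nat \<Rightarrow> nat \<Rightarrow> real" where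
  "expected_frequent W l n = measure_pmf.expectation (replicate_pmf n W) (\<lambda>xs. real (num_frequent l xs))"

lemma expected_frequent_nonneg: "0 \<le> expected_frequent W l n"
  unfolding expected_frequent_def by (rule Bochner_Integration.integral_nonneg) simp

lemma expected_frequent_le:
  assumes l: "l \<ge> 1"
  shows "expected_frequent W l n \<le> real n"
proof -
  have le: "num_frequent l xs \<le> n" if "xs \<in> set_pmf (replicate_pmf n W)" for xs
    using that num_frequent_le_length[OF l, of xs] by (simp add: set_replicate_pmf)
  show ?thesis unfolding expected_frequent_def
    by (intro measure_pmf.integral_le_const measure_pmf.integrable_const_bound[where B = "real n"] AE_pmfI)
       (simp_all add: le)
qed

lemma expected_frequent_Suc_diff:
  assumes l: "l \<ge> 1"
  shows "expected_frequent W l (Suc n) - expected_frequent W l n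
           = measure_pmf.expectation W (\<lambda>x. pmf (binomial_pmf n (pmf W x)) (l - 1))"
proof -
  define Q where "Q = pair_pmf W (replicate_pmf n W)"
  define F where "F xs = real (num_frequent l xs)" for xs :: "'a list"
  have F_le: "F ys \<le> real n" "F (y # ys) \<le> real n + 1" if "(y, ys) \<in> set_pmf Q" for y ys
    using that num_frequent_le_length[OF l, of ys] num_frequent_le_length[OF l, of "y # ys"]
    by (auto simp: Q_def F_def set_replicate_pmf)
  have int_Cons: "integrable Q (\<lambda>z. F (fst z # snd z))"
    by (rule measure_pmf.integrable_const_bound[where B = "real n + 1"])
       (auto intro!: AE_pmfI dest: F_le simp: F_def)
  have int_tail: "integrable Q (\<lambda>z. F (snd z))"
    by (rule measure_pmf.integrable_const_bound[where B = "real n"])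
       (auto intro!: AE_pmfI dest: F_le simp: F_def)
  have "expected_frequent W l (Suc n) - expected_frequent W l n
      = measure_pmf.expectation Q (\<lambda>z. F (fst z # snd z)) - measure_pmf.expectation Q (\<lambda>z. F (snd z))"
    unfolding expected_frequent_def replicate_pmf_Suc' Q_def F_def
    by (simp add: split_beta del: expectation_pair_pmf_snd) (rule expectation_pair_pmf_snd[symmetric])
  also have "\<dots> = measure_pmf.expectation Q (\<lambda>z. F (fst z # snd z) - F (snd z))"
    using int_Cons int_tail by (simp add: Bochner_Integration.integral_diff)
  also have "\<dots> = measure_pmf.expectation Q (\<lambda>z. indicator {l - 1} (count_list (snd z) (fst z)))"
    by (intro Bochner_Integration.integral_cong) (auto simp: F_def num_frequent_Cons[OF l])
  also have "\<dots> = measure_pmf.expectation W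
                    (\<lambda>y. measure_pmf.expectation (replicate_pmf n W) (\<lambda>ys. indicator {l - 1} (count_list ys y)))"
    unfolding Q_def by (subst expectation_pair_pmf[where C = 1]) (auto simp: indicator_def)
  also have "\<dots> = measure_pmf.expectation W (\<lambda>x. pmf (binomial_pmf n (pmf W x)) (l - 1))"
  proof (intro Bochner_Integration.integral_cong refl)
    fix y
    have "measure_pmf.expectation (replicate_pmf n W) (\<lambda>ys. indicator {l - 1} (count_list ys y))
        = measure_pmf.expectation (map_pmf (\<lambda>ys. count_list ys y) (replicate_pmf n W))
            (indicator {l - 1} :: nat \<Rightarrow> real)"
      by (rule integral_map_pmf[symmetric])
    then show "measure_pmf.expectation (replicate_pmf n W) (\<lambda>ys. indicator {l - 1} (count_list ys y))
        = pmf (binomial_pmf n (pmf W y)) (l - 1)"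
      by (simp add: count_list_replicate_pmf measure_pmf_single)
  qed
  finally show ?thesis .
qed

lemma expected_frequent_Suc_diff_bounds:
  assumes l: "l \<ge> 1"
  shows "expected_frequent W l (Suc n) - expected_frequent W l n \<in> {0..1}"
proof -
  have "integrable W (\<lambda>x. pmf (binomial_pmf n (pmf W x)) (l - 1))"
    by (rule measure_pmf.integrable_const_bound[where B = 1]) (auto simp: pmf_le_1 simp del: pmf_binomial)
  then show ?thesis
    unfolding expected_frequent_Suc_diff[OF l]
    by (auto intro!: measure_pmf.integral_ge_const measure_pmf.integral_le_const
             simp: pmf_le_1 simp del: pmf_binomial)
qed

lemma expected_frequent_second_diff_le:
  assumes l: "l \<ge> 1"
  shows "\<bar>(expected_frequent W l (Suc (Suc n)) - expected_frequent W l (Suc n))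
           - (expected_frequent W l (Suc n) - expected_frequent W l n)\<bar> \<le> real l / (real n + 1)"
proof -
  define g where "g k x = pmf (binomial_pmf k (pmf W x)) (l - 1)" for k x
  have int: "integrable W (g k)" for k
    by (rule measure_pmf.integrable_const_bound[where B = 1]) (auto simp: g_def pmf_le_1 simp del: pmf_binomial)
  have "\<bar>g (Suc n) x - g n x\<bar> \<le> real l / (real n + 1)" for x
    using pmf_binomial_Suc_diff_le[of "pmf W x" n "l - 1"] l by (simp add: g_def pmf_le_1 of_nat_diff)
  then have "\<bar>measure_pmf.expectation W (\<lambda>x. g (Suc n) x - g n x)\<bar> \<le> real l / (real n + 1)"
    using int by (intro order_trans[OF integral_abs_bound] measure_pmf.integral_le_const) auto
  moreover have "measure_pmf.expectation W (\<lambda>x. g (Suc n) x - g n x)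
      = measure_pmf.expectation W (g (Suc n)) - measure_pmf.expectation W (g n)"
    by (rule Bochner_Integration.integral_diff[OF int int])
  ultimately show ?thesis
    unfolding expected_frequent_Suc_diff[OF l] g_def[symmetric] by simp
qed

section \<open>The nested occupancy scheme as an i.i.d. sample\<close>

definition boxes :: "nat \<Rightarrow> nat \<Rightarrow> (nat \<Rightarrow> nat \<Rightarrow> nat) \<Rightarrow> nat list list" where
  "boxes j n \<omega> = map (box \<omega> j) [0..<n]"

lemma count_list_boxes: "count_list (boxes j n \<omega>) r = card {i. i < n \<and> box \<omega> j i = r}"
proof -
  have "count_list (boxes j n \<omega>) r = card {i. i < n \<and> r = box \<omega> j i}"
    unfolding boxes_def count_list_eq_length_filter length_filter_conv_card
    by (intro arg_cong[where f = card] Collect_cong) auto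
  also have "{i. i < n \<and> r = box \<omega> j i} = {i. i < n \<and> box \<omega> j i = r}"
    by auto
  finally show ?thesis .
qed

lemma occ_eq_num_frequent:
  assumes "l \<ge> 1"
  shows "occ \<omega> j l n = num_frequent l (boxes j n \<omega>)"
proof -
  have "length r = j" if "l \<le> card {i. i < n \<and> box \<omega> j i = r}" for r
  proof -
    from that assms have "card {i. i < n \<and> box \<omega> j i = r} \<noteq> 0" by linarith
    then obtain i where "box \<omega> j i = r" by (metis (mono_tags, lifting) card.empty empty_Collect_eq)
    then show ?thesis by (auto simp: box_def)
  qed
  then show ?thesis
    unfolding occ_def num_frequent_def count_list_boxes
    by (intro arg_cong[where f = card] Collect_cong) auto
qed

lemma occ_le: "l \<ge> 1 \<Longrightarrow> occ \<omega> j l n \<le> n"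
  using num_frequent_le_length[of l "boxes j n \<omega>"] by (simp add: occ_eq_num_frequent boxes_def)

lemma boxes_eq_iff:
  "boxes j n \<omega> = xs \<longleftrightarrow>
     length xs = n \<and> (\<forall>i<n. length (xs ! i) = j \<and> (\<forall>k<j. \<omega> i k = xs ! i ! k))"
  unfolding boxes_def box_def by (auto simp: list_eq_iff_nth_eq)

lemma space_ball_space: "space (ball_space p) = UNIV"
  unfolding ball_space_def by (simp add: space_PiM)

lemma prob_space_ball_space: "prob_space (ball_space p)"
  unfolding ball_space_def by (intro prob_space_PiM measure_pmf.prob_space_axioms)

definition prefix_cylinder :: "nat \<Rightarrow> 'a list \<Rightarrow> (nat \<Rightarrow> 'a) set" where
  "prefix_cylinder j ys = {y. \<forall>k<j. y k = ys ! k}"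

lemma prefix_cylinder_in_sets: "prefix_cylinder j ys \<in> sets (PiM UNIV (\<lambda>_::nat. measure_pmf P))"
proof -
  have "{y \<in> space (PiM UNIV (\<lambda>_::nat. measure_pmf P)). \<forall>k\<in>{..<j}. y k \<in> {ys ! k}}
          \<in> sets (PiM UNIV (\<lambda>_::nat. measure_pmf P))"
    by (intro sets.sets_Collect_finite_All sets_Collect_single') auto
  then show ?thesis by (simp add: prefix_cylinder_def space_PiM Ball_def)
qed

lemma emeasure_prefix_cylinder:
  "emeasure (PiM UNIV (\<lambda>_::nat. measure_pmf P)) (prefix_cylinder j ys) = (\<Prod>k<j. pmf P (ys ! k))"
proof -
  interpret product_prob_space "\<lambda>_::nat. measure_pmf P" UNIV
    by (intro product_prob_spaceI measure_pmf.prob_space_axioms)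
  have "emeasure (PiM UNIV (\<lambda>_::nat. measure_pmf P))
          {y \<in> space (PiM UNIV (\<lambda>_::nat. measure_pmf P)). \<forall>k\<in>{..<j}. y k \<in> {ys ! k}}
        = (\<Prod>k<j. emeasure (measure_pmf P) {ys ! k})"
    by (rule emeasure_PiM_Collect) auto
  then show ?thesis by (simp add: prefix_cylinder_def space_PiM Ball_def emeasure_pmf_single prod_ennreal)
qed

lemma boxes_vimage:
  "boxes j n -` {xs} \<inter> space (ball_space p) =
     (if length xs = n \<and> (\<forall>i<n. length (xs ! i) = j)
      then {\<omega> \<in> space (ball_space p). \<forall>i\<in>{..<n}. \<omega> i \<in> prefix_cylinder j (xs ! i)} else {})"
  unfolding space_ball_space prefix_cylinder_def using boxes_eq_iff[of j n _ xs] by auto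

lemma measurable_boxes: "boxes j n \<in> measurable (ball_space p) (count_space UNIV)"
proof (subst measurable_count_space_eq2_countable, intro conjI ballI)
  fix xs :: "nat list list"
  have "{\<omega> \<in> space (ball_space p). \<forall>i\<in>{..<n}. \<omega> i \<in> prefix_cylinder j (xs ! i)}
          \<in> sets (ball_space p)"
    unfolding ball_space_def using prefix_cylinder_in_sets by measurable
  then show "boxes j n -` {xs} \<inter> space (ball_space p) \<in> sets (ball_space p)"
    unfolding boxes_vimage by simp
qed auto

lemma distr_boxes:
  "distr (ball_space p) (count_space UNIV) (boxes j n) = measure_pmf (replicate_pmf n (replicate_pmf j p))"
proof (rule measure_eqI_countable[where A = UNIV])
  fix xs :: "nat list list"
  have "emeasure (ball_space p) (boxes j n -` {xs} \<inter> space (ball_space p))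
      = ennreal (pmf (replicate_pmf n (replicate_pmf j p)) xs)"
  proof (cases "length xs = n \<and> (\<forall>i<n. length (xs ! i) = j)")
    case True
    interpret product_prob_space "\<lambda>_::nat. PiM UNIV (\<lambda>_::nat. measure_pmf p)" UNIV
      by (intro product_prob_spaceI prob_space_PiM measure_pmf.prob_space_axioms)
    have "emeasure (ball_space p)
            {\<omega> \<in> space (ball_space p). \<forall>i\<in>{..<n}. \<omega> i \<in> prefix_cylinder j (xs ! i)}
          = (\<Prod>i<n. emeasure (PiM UNIV (\<lambda>_::nat. measure_pmf p)) (prefix_cylinder j (xs ! i)))"
      unfolding ball_space_def by (rule emeasure_PiM_Collect) (auto intro: prefix_cylinder_in_sets)
    also have "\<dots> = ennreal (\<Prod>i<n. \<Prod>k<j. pmf p (xs ! i ! k))"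
      by (simp add: emeasure_prefix_cylinder prod_ennreal prod_nonneg)
    also have "(\<Prod>i<n. \<Prod>k<j. pmf p (xs ! i ! k)) = pmf (replicate_pmf n (replicate_pmf j p)) xs"
      using True by (simp add: pmf_replicate_pmf)
    finally show ?thesis unfolding boxes_vimage using True by simp
  next
    case False
    have "pmf (replicate_pmf n (replicate_pmf j p)) xs = 0"
      using False by (auto simp: pmf_replicate_pmf intro!: prod_zero)
    then show ?thesis unfolding boxes_vimage if_not_P[OF False] by simp
  qed
  then show "emeasure (distr (ball_space p) (count_space UNIV) (boxes j n)) {xs}
      = emeasure (measure_pmf (replicate_pmf n (replicate_pmf j p))) {xs}"
    by (simp add: emeasure_distr[OF measurable_boxes] emeasure_pmf_single)
qed auto

lemma EK_fixed_eq_expected_frequent: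
  assumes "l \<ge> 1"
  shows "EK_fixed p j l n = expected_frequent (replicate_pmf j p) l n"
proof -
  have "EK_fixed p j l n = integral\<^sup>L (ball_space p) (\<lambda>\<omega>. real (num_frequent l (boxes j n \<omega>)))"
    unfolding EK_fixed_def occ_eq_num_frequent[OF assms] ..
  also have "\<dots> = integral\<^sup>L (distr (ball_space p) (count_space UNIV) (boxes j n))
                    (\<lambda>xs. real (num_frequent l xs))"
    by (rule integral_distr[symmetric, OF measurable_boxes]) simp
  finally show ?thesis unfolding distr_boxes expected_frequent_def .
qed

lemma (in pair_sigma_finite) integral_snd_nonneg:
  fixes H :: "'a \<times> 'b \<Rightarrow> real"
  assumes H: "H \<in> borel_measurable (M1 \<Otimes>\<^sub>M M2)" and nonneg: "\<And>z. 0 \<le> H z"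
    and int_inner: "\<And>y. integrable M1 (\<lambda>x. H (x, y))"
    and int_outer: "integrable M2 (\<lambda>y. \<integral>x. H (x, y) \<partial>M1)"
  shows "integral\<^sup>L (M1 \<Otimes>\<^sub>M M2) H = (\<integral>y. \<integral>x. H (x, y) \<partial>M1 \<partial>M2)"
proof -
  have "integral\<^sup>L (M1 \<Otimes>\<^sub>M M2) H = enn2real (\<integral>\<^sup>+ z. ennreal (H z) \<partial>(M1 \<Otimes>\<^sub>M M2))"
    by (rule integral_eq_nn_integral) (use H nonneg in auto)
  also have "(\<integral>\<^sup>+ z. ennreal (H z) \<partial>(M1 \<Otimes>\<^sub>M M2))
      = (\<integral>\<^sup>+ y. \<integral>\<^sup>+ x. ennreal (H (x, y)) \<partial>M1 \<partial>M2)"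
    by (rule nn_integral_snd[symmetric]) (use H in measurable)
  also have "\<dots> = (\<integral>\<^sup>+ y. ennreal (\<integral>x. H (x, y) \<partial>M1) \<partial>M2)"
    using int_inner nonneg by (simp add: nn_integral_eq_integral)
  also have "\<dots> = ennreal (\<integral>y. \<integral>x. H (x, y) \<partial>M1 \<partial>M2)"
    using int_outer nonneg by (intro nn_integral_eq_integral) (auto intro: Bochner_Integration.integral_nonneg)
  finally show ?thesis
    by (simp add: Bochner_Integration.integral_nonneg nonneg)
qed

lemma borel_measurable_occ:
  "l \<ge> 1 \<Longrightarrow> (\<lambda>\<omega>. real (occ \<omega> j l n)) \<in> borel_measurable (ball_space p)"
  unfolding occ_eq_num_frequent by (rule measurable_compose[OF measurable_boxes]) simp

lemma borel_measurable_occ_pair: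
  assumes "l \<ge> 1"
  shows "(\<lambda>(\<omega>, N). real (occ \<omega> j l N)) \<in> borel_measurable (ball_space p \<Otimes>\<^sub>M measure_pmf Q)"
proof -
  have "(\<lambda>z. real (occ (fst z) j l (snd z))) \<in> borel_measurable (ball_space p \<Otimes>\<^sub>M measure_pmf Q)"
  proof (rule measurable_compose_countable'[where f = "\<lambda>N z. real (occ (fst z) j l N)" and g = snd])
    from borel_measurable_occ[OF assms]
    show "(\<lambda>z. real (occ (fst z) j l N)) \<in> borel_measurable (ball_space p \<Otimes>\<^sub>M measure_pmf Q)" for N
      by (rule measurable_compose[OF measurable_fst])
    show "snd \<in> measurable (ball_space p \<Otimes>\<^sub>M measure_pmf Q) (count_space UNIV)"
      using measurable_snd[of "ball_space p" "measure_pmf Q"]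
      by (simp add: measurable_cong_sets[OF refl sets_measure_pmf_count_space])
  qed auto
  then show ?thesis by (simp add: case_prod_unfold)
qed

lemma EK_pois_eq_expected_frequent:
  assumes l: "l \<ge> 1" and t: "t > 0"
  shows "EK_pois p j l t = measure_pmf.expectation (poisson_pmf t) (expected_frequent (replicate_pmf j p) l)"
proof -
  interpret ball: prob_space "ball_space p"
    by (rule prob_space_ball_space)
  interpret pair_sigma_finite "ball_space p" "measure_pmf (poisson_pmf t)"
    by (intro pair_sigma_finite.intro prob_space_imp_sigma_finite prob_space_ball_space
        measure_pmf.prob_space_axioms)
  have int_inner: "integrable (ball_space p) (\<lambda>\<omega>. real (occ \<omega> j l N))" for N
    using borel_measurable_occ[OF l]
    by (intro ball.integrable_const_bound[where B = "real N"]) (auto simp: occ_le[OF l])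
  have inner: "(\<integral>\<omega>. real (occ \<omega> j l N) \<partial>ball_space p) = expected_frequent (replicate_pmf j p) l N" for N
    using EK_fixed_eq_expected_frequent[OF l] unfolding EK_fixed_def .
  have int_outer: "integrable (poisson_pmf t) (expected_frequent (replicate_pmf j p) l)"
    by (rule Bochner_Integration.integrable_bound[OF poisson_pmf_mean(1)[OF t]])
       (simp_all add: expected_frequent_nonneg expected_frequent_le[OF l])
  show ?thesis
    unfolding EK_pois_def
    by (subst integral_snd_nonneg[OF borel_measurable_occ_pair[OF l]])
       (use int_inner int_outer inner in \<open>simp_all add: split_beta\<close>)
qed

theorem lemma2p12:
  fixes p :: "nat pmf"
  assumes "infinite {k. pmf p k > 0}"
  shows "\<forall>l\<ge>1. \<exists>B::real. \<forall>j\<ge>1. \<forall>\<^sub>F t in at_top.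
           \<bar>EK_pois p j l t - EK_fixed p j l (nat \<lfloor>t\<rfloor>)\<bar> \<le> B"
proof (intro allI impI exI)
  fix l j :: nat
  assume l: "l \<ge> 1"
  define f where "f = expected_frequent (replicate_pmf j p) l"
  show "\<forall>\<^sub>F t in at_top. \<bar>EK_pois p j l t - EK_fixed p j l (nat \<lfloor>t\<rfloor>)\<bar> \<le> 4 * real l + 1"
    using eventually_ge_at_top[of "1::real"]
  proof eventually_elim
    case (elim t)
    have "\<bar>measure_pmf.expectation (poisson_pmf t) f - f (nat \<lfloor>t\<rfloor>)\<bar> \<le> 4 * real l + 1"
      using l elim unfolding f_def
      by (intro poisson_expectation_near_floor expected_frequent_second_diff_le expected_frequent_Suc_diff_bounds)
         simp_all
    then show ?case
      using elim by (simp add: f_def EK_pois_eq_expected_frequent[OF l] EK_fixed_eq_expected_frequent[OF l])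
  qed
qed

end
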